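(* Let $s_n$ ($n\ge1$) be the number of nonempty-length canonical secondary structures on $[1,n]$, and let $S(z)=\sum_{n\ge1}s_nz^n$. Then in a neighborhood of $z=0$, $$S(z)=\frac{1-z-z^2+z^3-z^5-\sqrt{F(z)}}{2z^4},\qquad F(z)=4z^5(-1+z^2-z^4)+(-1+z+z^2-z^3+z^5)^2,$$ where the branch of the square root satisfies $\sqrt{F(0)}=1$. Equivalently, $S(z)$ together with the generating function $R(z)$ of the class $L_2=\{T : \text{the structure obtained by enclosing } T \text{ in one additional outer base pair is canonical}\}$ (counted by length of $T$) satisfies $$S=z+zS+z^2R+z^2SR,\qquad R=z^3+z^2R+z^4SR+z^3S.$$
   Context: A secondary structure on $[1,n]$ (with minimum hairpin size $\theta=1$) is a set $S$ of pairs $(i,j)$ of integers with $1\le i<j\le n$ such that: (i) there are no $(i,j),(k,\ell)\in S$ with $i<k<j<\ell$; (ii) every position of $[1,n]$ belongs to at most one pair of $S$; (iii) $j-i>1$ for every $(i,j)\in S$. Any position may pair with any other. A secondary structure is identified with its dot-bracket word over $\{\bullet,(,)\}$ (position $i$ is $\bullet$ if unpaired, $($ if paired with a larger position, $)$ if paired with a smaller position). A secondary structure $S$ is canonical if there is no $(i,j)\in S$ with both $(i-1,j+1)\notin S$ and $(i+1,j-1)\notin S$. "Enclosing $T$ in an outer base pair" means forming the word $(\,T\,)$ of length $|T|+2$. *)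

theory Defs
  imports Complex_Main "HOL-Computational_Algebra.Formal_Power_Series"
begin

definition secondary :: "nat \<Rightarrow> (nat \<times> nat) set \<Rightarrow> bool" where
  "secondary n S \<longleftrightarrow>
     (\<forall>(i,j)\<in>S. 1 \<le> i \<and> i < j \<and> j \<le> n) \<and>
     (\<forall>(i,j)\<in>S. \<forall>(k,l)\<in>S. \<not> (i < k \<and> k < j \<and> j < l)) \<and>
     (\<forall>(i,j)\<in>S. \<forall>(k,l)\<in>S. {i,j} \<inter> {k,l} \<noteq> {} \<longrightarrow> (i,j) = (k,l)) \<and>
     (\<forall>(i,j)\<in>S. j - i > 1)"

definition canonical :: "(nat \<times> nat) set \<Rightarrow> bool" where
  "canonical S \<longleftrightarrow> (\<forall>(i,j)\<in>S. (i - 1, j + 1) \<in> S \<or> (i + 1, j - 1) \<in> S)"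

definition enclose :: "nat \<Rightarrow> (nat \<times> nat) set \<Rightarrow> (nat \<times> nat) set" where
  "enclose n T = insert (1, n + 2) ((\<lambda>(i,j). (i + 1, j + 1)) ` T)"

definition num_canonical :: "nat \<Rightarrow> nat" where
  "num_canonical n = card {S. secondary n S \<and> canonical S}"

definition num_L2 :: "nat \<Rightarrow> nat" where
  "num_L2 n = card {T. secondary n T \<and> secondary (n + 2) (enclose n T) \<and> canonical (enclose n T)}"

definition S_fps :: "int fps" where
  "S_fps = Abs_fps (\<lambda>n. if n = 0 then 0 else int (num_canonical n))"

definition R_fps :: "int fps" where
  "R_fps = Abs_fps (\<lambda>n. int (num_L2 n))"

definition F_poly :: "complex \<Rightarrow> complex" where
  "F_poly z = 4 * z^5 * (-1 + z^2 - z^4) + (-1 + z + z^2 - z^3 + z^5)^2"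

end

theory Submission
  imports Defs "HOL-Analysis.FPS_Convergence"
begin

(* Decompose a structure on [a,b] according to the partner of the first position a: either a is
   unpaired, or it pairs with some c and the structure splits into an inner part on [a+1,c-1] and
   an outer part on [c+1,b]. Canonicity of the whole forces the inner part to contain (a+1,c-1),
   i.e. to lie in L_2, unless (a,c) is itself stacked from outside. Counts only depend on the length
   of the interval; writing C_n (with C_0 = 1) for canonical structures, r_n for L_2 and w_n for
   structures that are canonical except possibly at the outermost pair, this gives
     C_n = C_(n-1) + sum_(k=3..n) r_(k-2) C_(n-k),   r_n = w_(n-2),   w_n + r_(n-2) = C_n + r_n,
   which are the two functional equations. Eliminating R gives the quadratic
     z^4 S^2 - (1 - z - z^2 + z^3 - z^5) S + z - z^3 + z^5 = 0.
   A structure is determined by its sets of opening and closing positions, so s_n <= 4^n and S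
   converges near 0; for |z| < 1/8 the square root 1 - z - z^2 + z^3 - z^5 - 2 z^4 S(z) of F(z) has
   positive real part, so it is the principal one. *)

section \<open>Secondary structures on an interval\<close>

definition secondary_on :: "nat \<Rightarrow> nat \<Rightarrow> (nat \<times> nat) set \<Rightarrow> bool" where
  "secondary_on a b S \<longleftrightarrow>
     (\<forall>i j. (i, j) \<in> S \<longrightarrow> a \<le> i \<and> i + 1 < j \<and> j \<le> b) \<and>
     (\<forall>i j k l. (i, j) \<in> S \<longrightarrow> (k, l) \<in> S \<longrightarrow> \<not> (i < k \<and> k < j \<and> j < l)) \<and>
     (\<forall>i j k l. (i, j) \<in> S \<longrightarrow> (k, l) \<in> S \<longrightarrow> (i = k \<or> i = l \<or> j = k \<or> j = l) \<longrightarrow> i = k \<and> j = l)"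

lemma secondary_iff_secondary_on: "secondary n S \<longleftrightarrow> secondary_on 1 n S"
proof -
  have "1 \<le> i \<and> i < j \<and> j \<le> n \<and> j - i > 1 \<longleftrightarrow> 1 \<le> i \<and> i + 1 < j \<and> j \<le> n" for i j :: nat
    by arith
  then have bounds: "(\<forall>(i, j)\<in>S. 1 \<le> i \<and> i < j \<and> j \<le> n) \<and> (\<forall>(i, j)\<in>S. j - i > 1) \<longleftrightarrow>
      (\<forall>i j. (i, j) \<in> S \<longrightarrow> 1 \<le> i \<and> i + 1 < j \<and> j \<le> n)"
    unfolding Ball_def split_paired_All by (simp flip: all_conj_distrib imp_conjR)
  have crossing: "(\<forall>(i, j)\<in>S. \<forall>(k, l)\<in>S. \<not> (i < k \<and> k < j \<and> j < l)) \<longleftrightarrow>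
      (\<forall>i j k l. (i, j) \<in> S \<longrightarrow> (k, l) \<in> S \<longrightarrow> \<not> (i < k \<and> k < j \<and> j < l))"
    by fast
  have disjoint: "(\<forall>(i, j)\<in>S. \<forall>(k, l)\<in>S. {i, j} \<inter> {k, l} \<noteq> {} \<longrightarrow> (i, j) = (k, l)) \<longleftrightarrow>
      (\<forall>i j k l. (i, j) \<in> S \<longrightarrow> (k, l) \<in> S \<longrightarrow> (i = k \<or> i = l \<or> j = k \<or> j = l) \<longrightarrow> i = k \<and> j = l)"
    by fast
  show ?thesis
    unfolding secondary_def secondary_on_def using bounds crossing disjoint by argo
qed

lemma secondary_onD:
  assumes "secondary_on a b S"
  shows secondary_on_bounds: "(i, j) \<in> S \<Longrightarrow> a \<le> i \<and> i + 1 < j \<and> j \<le> b"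
    and secondary_on_noncrossing: "(i, j) \<in> S \<Longrightarrow> (k, l) \<in> S \<Longrightarrow> \<not> (i < k \<and> k < j \<and> j < l)"
    and secondary_on_disjoint:
      "(i, j) \<in> S \<Longrightarrow> (k, l) \<in> S \<Longrightarrow> i = k \<or> i = l \<or> j = k \<or> j = l \<Longrightarrow> i = k \<and> j = l"
proof -
  note def = assms[unfolded secondary_on_def]
  show "(i, j) \<in> S \<Longrightarrow> a \<le> i \<and> i + 1 < j \<and> j \<le> b"
    using def by blast
  show "(i, j) \<in> S \<Longrightarrow> (k, l) \<in> S \<Longrightarrow> \<not> (i < k \<and> k < j \<and> j < l)"
    using def by blast
  show "(i, j) \<in> S \<Longrightarrow> (k, l) \<in> S \<Longrightarrow> i = k \<or> i = l \<or> j = k \<or> j = l \<Longrightarrow> i = k \<and> j = l"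
    using def[THEN conjunct2, THEN conjunct2, rule_format, of i j k l] by blast
qed

lemma secondary_on_empty: "secondary_on a b {}"
  unfolding secondary_on_def by simp

lemma secondary_on_subset:
  assumes "secondary_on a b S" "T \<subseteq> S" "\<And>i j. (i, j) \<in> T \<Longrightarrow> a' \<le> i \<and> j \<le> b'"
  shows "secondary_on a' b' T"
proof -
  have "a' \<le> i \<and> i + 1 < j \<and> j \<le> b'" if "(i, j) \<in> T" for i j
    using that assms(2,3) secondary_on_bounds[OF assms(1), of i j] by blast
  moreover have "\<not> (i < k \<and> k < j \<and> j < l)" if "(i, j) \<in> T" "(k, l) \<in> T" for i j k l
    using that assms(2) secondary_on_noncrossing[OF assms(1), of i j k l] by blast
  moreover have "i = k \<and> j = l" if "(i, j) \<in> T" "(k, l) \<in> T" "i = k \<or> i = l \<or> j = k \<or> j = l" for i j k l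
    using that assms(2) secondary_on_disjoint[OF assms(1), of i j k l] by blast
  ultimately show ?thesis
    unfolding secondary_on_def by blast
qed

lemma finite_secondary_on: "finite {S. secondary_on a b S}"
proof (rule finite_subset)
  show "{S. secondary_on a b S} \<subseteq> Pow ({a..b} \<times> {a..b})"
    by (auto dest: secondary_on_bounds)
qed simp

lemma secondary_on_enclose:
  assumes "a + 2 \<le> c" "secondary_on (a + 1) (c - 1) S"
  shows "secondary_on a c (insert (a, c) S)"
proof -
  have inside: "a < i \<and> i + 1 < j \<and> j < c" if "(i, j) \<in> S" for i j
    using secondary_on_bounds[OF assms(2) that] by linarith
  have "a \<le> i \<and> i + 1 < j \<and> j \<le> c" if "(i, j) \<in> insert (a, c) S" for i j
    using that assms(1) inside[of i j] by auto
  moreover have "\<not> (i < k \<and> k < j \<and> j < l)"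
    if "(i, j) \<in> insert (a, c) S" "(k, l) \<in> insert (a, c) S" for i j k l
    using that inside[of i j] inside[of k l] secondary_on_noncrossing[OF assms(2), of i j k l] by auto
  moreover have "i = k \<and> j = l"
    if "(i, j) \<in> insert (a, c) S" "(k, l) \<in> insert (a, c) S" "i = k \<or> i = l \<or> j = k \<or> j = l" for i j k l
    using that inside[of i j] inside[of k l] secondary_on_disjoint[OF assms(2), of i j k l] by auto
  ultimately show ?thesis
    unfolding secondary_on_def by blast
qed

lemma secondary_on_Un:
  assumes "a \<le> m" "m \<le> b" and S1: "secondary_on a m S1" and S2: "secondary_on (m + 1) b S2"
  shows "secondary_on a b (S1 \<union> S2)"
proof -
  have before: "i < j \<and> j < k \<and> k < l" if "(i, j) \<in> S1" "(k, l) \<in> S2" for i j k l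
    using secondary_on_bounds[OF S1 that(1)] secondary_on_bounds[OF S2 that(2)] by linarith
  have "a \<le> i \<and> i + 1 < j \<and> j \<le> b" if "(i, j) \<in> S1 \<union> S2" for i j
    using that assms(1,2) secondary_on_bounds[OF S1, of i j] secondary_on_bounds[OF S2, of i j] by auto
  moreover have "\<not> (i < k \<and> k < j \<and> j < l)" if "(i, j) \<in> S1 \<union> S2" "(k, l) \<in> S1 \<union> S2" for i j k l
    using that before[of i j k l] before[of k l i j]
      secondary_on_noncrossing[OF S1, of i j k l] secondary_on_noncrossing[OF S2, of i j k l]
    by auto
  moreover have "i = k \<and> j = l"
    if "(i, j) \<in> S1 \<union> S2" "(k, l) \<in> S1 \<union> S2" "i = k \<or> i = l \<or> j = k \<or> j = l" for i j k l
    using that before[of i j k l] before[of k l i j]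
      secondary_on_disjoint[OF S1, of i j k l] secondary_on_disjoint[OF S2, of i j k l]
    by auto
  ultimately show ?thesis
    unfolding secondary_on_def by blast
qed

lemma secondary_on_insert_pair:
  assumes "a + 2 \<le> c" "c \<le> b" "secondary_on (a + 1) (c - 1) S1" "secondary_on (c + 1) b S2"
  shows "secondary_on a b (insert (a, c) (S1 \<union> S2))"
  using secondary_on_Un[OF _ assms(2) secondary_on_enclose[OF assms(1,3)] assms(4)] assms(1) by simp

lemma secondary_on_split:
  assumes S: "secondary_on a b S" and ac: "(a, c) \<in> S"
  defines "S1 \<equiv> {p \<in> S. snd p < c}" and "S2 \<equiv> {p \<in> S. c < fst p}"
  shows "a + 2 \<le> c" "c \<le> b" "S = insert (a, c) (S1 \<union> S2)"
    "secondary_on (a + 1) (c - 1) S1" "secondary_on (c + 1) b S2"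
proof -
  have other: "a < i \<and> j < c \<or> c < i" if "(i, j) \<in> S" "(i, j) \<noteq> (a, c)" for i j
  proof -
    have "i \<noteq> a" "i \<noteq> c" "j \<noteq> c"
      using secondary_on_disjoint[OF S that(1) ac] that(2) by blast+
    moreover have "\<not> (a < i \<and> i < c \<and> c < j)"
      using secondary_on_noncrossing[OF S ac that(1)] .
    ultimately show ?thesis
      using secondary_on_bounds[OF S that(1)] by linarith
  qed
  show "a + 2 \<le> c" "c \<le> b"
    using secondary_on_bounds[OF S ac] by linarith+
  show "S = insert (a, c) (S1 \<union> S2)"
    unfolding S1_def S2_def using ac other by fastforce
  show "secondary_on (a + 1) (c - 1) S1"
    by (rule secondary_on_subset[OF S]) (use other secondary_on_bounds[OF S] in \<open>force simp: S1_def\<close>)+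
  show "secondary_on (c + 1) b S2"
    by (rule secondary_on_subset[OF S]) (use secondary_on_bounds[OF S] in \<open>force simp: S2_def\<close>)+
qed

lemma insert_pair_inverse:
  assumes "a + 2 \<le> c" "secondary_on (a + 1) (c - 1) S1" "secondary_on (c + 1) b S2"
  shows "{p \<in> insert (a, c) (S1 \<union> S2). snd p < c} = S1" "{p \<in> insert (a, c) (S1 \<union> S2). c < fst p} = S2"
  using secondary_on_bounds[OF assms(2)] secondary_on_bounds[OF assms(3)] assms(1) by fastforce+

lemma inj_on_insert_pair:
  assumes "a + 2 \<le> c"
  shows "inj_on (\<lambda>(S1, S2). insert (a, c) (S1 \<union> S2))
    ({S1. secondary_on (a + 1) (c - 1) S1} \<times> {S2. secondary_on (c + 1) b S2})"
proof (rule inj_onI)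
  fix x y
  assume "x \<in> {S1. secondary_on (a + 1) (c - 1) S1} \<times> {S2. secondary_on (c + 1) b S2}"
    and "y \<in> {S1. secondary_on (a + 1) (c - 1) S1} \<times> {S2. secondary_on (c + 1) b S2}"
    and eq: "(\<lambda>(S1, S2). insert (a, c) (S1 \<union> S2)) x = (\<lambda>(S1, S2). insert (a, c) (S1 \<union> S2)) y"
  then obtain S1 S2 T1 T2 where xy: "x = (S1, S2)" "y = (T1, T2)"
    and S: "secondary_on (a + 1) (c - 1) S1" "secondary_on (c + 1) b S2"
    and T: "secondary_on (a + 1) (c - 1) T1" "secondary_on (c + 1) b T2"
    by auto
  from eq have "insert (a, c) (S1 \<union> S2) = insert (a, c) (T1 \<union> T2)"
    unfolding xy by simp
  then show "x = y"
    unfolding xy using insert_pair_inverse[OF assms S] insert_pair_inverse[OF assms T] by simp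
qed

text \<open>By induction on the span \<open>j - i\<close>: if \<open>i\<close> had another partner in \<open>S'\<close>, a pair closing
  at \<open>j\<close> or at that partner would be shorter, hence shared, and clash with \<open>(i, j)\<close>.\<close>

lemma secondary_on_subset_if_same_ends:
  assumes S: "secondary_on a b S" and S': "secondary_on a' b' S'"
    and fst: "fst ` S = fst ` S'" and snd: "snd ` S = snd ` S'"
  shows "S \<subseteq> S'"
proof -
  have "(i, j) \<in> S'" if "(i, j) \<in> S" for i j
    using that
  proof (induction "j - i" arbitrary: i j rule: less_induct)
    case less
    note ij = less.prems
    have lt: "x < y" if "(x, y) \<in> S" for x y using secondary_on_bounds[OF S that] by linarith
    have lt': "x < y" if "(x, y) \<in> S'" for x y using secondary_on_bounds[OF S' that] by linarith
    obtain j' where j': "(i, j') \<in> S'"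
      using fst ij by (metis fstI image_iff prod.collapse)
    consider "j' = j" | "j < j'" | "j' < j" by linarith
    then show ?case
    proof cases
      case 1
      then show ?thesis using j' by simp
    next
      case 2
      obtain i2 where i2: "(i2, j) \<in> S'"
        using snd ij by (metis sndI image_iff prod.collapse)
      have "i2 \<noteq> i" using secondary_on_disjoint[OF S' i2 j'] 2 by auto
      moreover have "\<not> i2 < i" using secondary_on_noncrossing[OF S' i2 j'] 2 lt[OF ij] by auto
      ultimately have ii2: "i < i2" "i2 < j" using lt'[OF i2] by auto
      obtain j2 where j2: "(i2, j2) \<in> S"
        using fst i2 by (metis fstI image_iff prod.collapse)
      have "j2 \<noteq> j" using secondary_on_disjoint[OF S j2 ij] ii2 by auto
      moreover have "\<not> j < j2" using secondary_on_noncrossing[OF S ij j2] ii2 by auto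
      ultimately have "j2 - i2 < j - i" using ii2 by linarith
      then have "(i2, j2) \<in> S'" using less.hyps j2 by blast
      then have "j2 = j" using secondary_on_disjoint[OF S' i2] by blast
      with \<open>j2 \<noteq> j\<close> show ?thesis by simp
    next
      case 3
      obtain i3 where i3: "(i3, j') \<in> S"
        using snd j' by (metis sndI image_iff prod.collapse)
      have "i3 \<noteq> i" using secondary_on_disjoint[OF S i3 ij] 3 by auto
      moreover have "\<not> i3 < i" using secondary_on_noncrossing[OF S i3 ij] 3 lt'[OF j'] by auto
      ultimately have "i < i3" "i3 < j'" using lt[OF i3] by auto
      then have "j' - i3 < j - i" using 3 by linarith
      then have "(i3, j') \<in> S'" using less.hyps i3 by blast
      then have "i3 = i" using secondary_on_disjoint[OF S' _ j'] by blast
      with \<open>i3 \<noteq> i\<close> show ?thesis by simp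
    qed
  qed
  then show ?thesis
    by auto
qed

lemma card_secondary_on_le: "card {S. secondary_on 1 n S} \<le> 4 ^ n"
proof -
  let ?ends = "\<lambda>S. (fst ` S, snd ` S)"
  have "inj_on ?ends {S. secondary_on 1 n S}"
  proof (rule inj_onI)
    fix S S' assume "S \<in> {S. secondary_on 1 n S}" "S' \<in> {S. secondary_on 1 n S}" "?ends S = ?ends S'"
    then show "S = S'"
      using secondary_on_subset_if_same_ends[of 1 n S 1 n S'] secondary_on_subset_if_same_ends[of 1 n S' 1 n S]
      by auto
  qed
  moreover have "?ends ` {S. secondary_on 1 n S} \<subseteq> Pow {1..n} \<times> Pow {1..n}"
    using secondary_on_bounds[of 1 n] by fastforce
  ultimately have "card {S. secondary_on 1 n S} \<le> card (Pow {1..n} \<times> Pow {1..n})"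
    by (intro card_inj_on_le) auto
  also have "\<dots> = 4 ^ n"
    by (simp add: card_cartesian_product card_Pow power_mult_distrib[symmetric])
  finally show ?thesis .
qed

section \<open>Canonicity with exempted pairs\<close>

definition canonical_except :: "(nat \<times> nat) set \<Rightarrow> (nat \<times> nat) set \<Rightarrow> bool" where
  "canonical_except X S \<longleftrightarrow>
     (\<forall>i j. (i, j) \<in> S \<longrightarrow> (i, j) \<in> X \<or> (i - 1, j + 1) \<in> S \<or> (i + 1, j - 1) \<in> S)"

lemma canonical_iff_canonical_except: "canonical S \<longleftrightarrow> canonical_except {} S"
  unfolding canonical_def canonical_except_def by auto

lemma canonical_except_empty: "canonical_except X {}"
  unfolding canonical_except_def by simp

lemma canonical_except_mono: "X \<subseteq> Y \<Longrightarrow> canonical_except X S \<Longrightarrow> canonical_except Y S"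
  unfolding canonical_except_def by blast

lemma canonical_except_disjoint: "X \<inter> S = {} \<Longrightarrow> canonical_except X S \<longleftrightarrow> canonical_except {} S"
  unfolding canonical_except_def by blast

text \<open>The pair \<open>(a, c)\<close> can only be stacked from inside, because \<open>a\<close> is the first position.\<close>

lemma canonical_except_insert_pair:
  assumes "1 \<le> a" "a + 2 \<le> c" "X \<subseteq> {(a, c)}"
    and S1: "secondary_on (a + 1) (c - 1) S1" and S2: "secondary_on (c + 1) b S2"
  shows "canonical_except X (insert (a, c) (S1 \<union> S2)) \<longleftrightarrow>
    ((a + 1, c - 1) \<in> S1 \<or> (a, c) \<in> X) \<and> canonical_except {(a + 1, c - 1)} S1 \<and> canonical_except {} S2"
proof -
  define S where "S = insert (a, c) (S1 \<union> S2)"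
  note B1 = secondary_on_bounds[OF S1] and B2 = secondary_on_bounds[OF S2]
  have outer: "(a - 1, c + 1) \<notin> S" "(a + 1, c - 1) \<in> S \<longleftrightarrow> (a + 1, c - 1) \<in> S1"
    unfolding S_def using assms(1,2) B1[of "a - 1" "c + 1"] B2[of "a - 1" "c + 1"] B2[of "a + 1" "c - 1"]
    by auto
  have in_S1: "((i, j) \<in> X \<or> (i - 1, j + 1) \<in> S \<or> (i + 1, j - 1) \<in> S) \<longleftrightarrow>
      ((i, j) = (a + 1, c - 1) \<or> (i - 1, j + 1) \<in> S1 \<or> (i + 1, j - 1) \<in> S1)" if "(i, j) \<in> S1" for i j
    unfolding S_def using that assms(3) B1[of i j] B2[of "i - 1" "j + 1"] B2[of "i + 1" "j - 1"]
    by auto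
  have in_S2: "((i, j) \<in> X \<or> (i - 1, j + 1) \<in> S \<or> (i + 1, j - 1) \<in> S) \<longleftrightarrow>
      ((i - 1, j + 1) \<in> S2 \<or> (i + 1, j - 1) \<in> S2)" if "(i, j) \<in> S2" for i j
    unfolding S_def using that assms(2,3) B2[of i j] B1[of "i - 1" "j + 1"] B1[of "i + 1" "j - 1"]
    by auto
  have split: "(\<forall>i j. (i, j) \<in> S \<longrightarrow> Q i j) \<longleftrightarrow>
      Q a c \<and> (\<forall>i j. (i, j) \<in> S1 \<longrightarrow> Q i j) \<and> (\<forall>i j. (i, j) \<in> S2 \<longrightarrow> Q i j)" for Q
    unfolding S_def by blast
  have "canonical_except X S \<longleftrightarrow>
      ((a, c) \<in> X \<or> (a - 1, c + 1) \<in> S \<or> (a + 1, c - 1) \<in> S) \<and>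
      (\<forall>i j. (i, j) \<in> S1 \<longrightarrow> (i, j) \<in> X \<or> (i - 1, j + 1) \<in> S \<or> (i + 1, j - 1) \<in> S) \<and>
      (\<forall>i j. (i, j) \<in> S2 \<longrightarrow> (i, j) \<in> X \<or> (i - 1, j + 1) \<in> S \<or> (i + 1, j - 1) \<in> S)"
    unfolding canonical_except_def by (rule split)
  also have "\<dots> \<longleftrightarrow> ((a + 1, c - 1) \<in> S1 \<or> (a, c) \<in> X) \<and> canonical_except {(a + 1, c - 1)} S1 \<and> canonical_except {} S2"
    unfolding canonical_except_def using outer in_S1 in_S2 by auto
  finally show ?thesis
    unfolding S_def .
qed

section \<open>Translation invariance\<close>

definition shift :: "nat \<Rightarrow> (nat \<times> nat) set \<Rightarrow> (nat \<times> nat) set" where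
  "shift k S = (\<lambda>(i, j). (i + k, j + k)) ` S"

lemma shift_mem_iff: "(x, y) \<in> shift k S \<longleftrightarrow> k \<le> x \<and> k \<le> y \<and> (x - k, y - k) \<in> S"
  unfolding shift_def by force

lemma all_pairs_shift:
  "(\<forall>x y. (x, y) \<in> shift k S \<longrightarrow> P x y) \<longleftrightarrow> (\<forall>i j. (i, j) \<in> S \<longrightarrow> P (i + k) (j + k))"
  unfolding shift_def by force

lemma shift_mem_shift_iff: "(i + k, j + k) \<in> shift k S \<longleftrightarrow> (i, j) \<in> S"
  unfolding shift_def by force

lemma shift_subset_shift_iff: "shift k Y \<subseteq> shift k S \<longleftrightarrow> Y \<subseteq> S"
  unfolding shift_def by (rule inj_image_subset_iff) (auto intro: injI)

lemma inj_shift: "inj (shift k)"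
proof (rule injI)
  fix Y S assume "shift k Y = shift k S"
  then have "Y \<subseteq> S" "S \<subseteq> Y"
    using shift_subset_shift_iff[of k Y S] shift_subset_shift_iff[of k S Y] by simp_all
  then show "Y = S" ..
qed

lemma shift_singleton: "shift k {(i, j)} = {(i + k, j + k)}"
  unfolding shift_def by simp

lemma secondary_on_shift: "secondary_on (a + k) (b + k) (shift k S) \<longleftrightarrow> secondary_on a b S"
  unfolding secondary_on_def by (simp add: all_pairs_shift)

lemma canonical_except_shift:
  assumes "1 \<le> a" "secondary_on a b S"
  shows "canonical_except (shift k X) (shift k S) \<longleftrightarrow> canonical_except X S"
  unfolding canonical_except_def all_pairs_shift
proof (intro all_cong1 imp_cong refl)
  fix i j assume "(i, j) \<in> S"
  then have "1 \<le> i" "1 \<le> j"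
    using assms secondary_on_bounds by fastforce+
  then have "(i + k - 1, j + k + 1) = (i - 1 + k, j + 1 + k)" "(i + k + 1, j + k - 1) = (i + 1 + k, j - 1 + k)"
    by simp_all
  then show "((i + k, j + k) \<in> shift k X \<or> (i + k - 1, j + k + 1) \<in> shift k S \<or> (i + k + 1, j + k - 1) \<in> shift k S) \<longleftrightarrow>
      ((i, j) \<in> X \<or> (i - 1, j + 1) \<in> S \<or> (i + 1, j - 1) \<in> S)"
    by (simp only: shift_mem_shift_iff)
qed

lemma bij_betw_shift: "bij_betw (shift k) {S. secondary_on a b S} {T. secondary_on (a + k) (b + k) T}"
proof -
  have "T \<in> shift k ` {S. secondary_on a b S}" if T: "secondary_on (a + k) (b + k) T" for T
  proof -
    define S where "S = {(i, j). (i + k, j + k) \<in> T}"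
    have "(x, y) \<in> shift k S \<longleftrightarrow> (x, y) \<in> T" for x y
      using secondary_on_bounds[OF T, of x y] by (auto simp: shift_mem_iff S_def)
    then have "shift k S = T"
      by (auto simp: set_eq_iff)
    then show ?thesis
      using T secondary_on_shift by blast
  qed
  moreover have "shift k ` {S. secondary_on a b S} \<subseteq> {T. secondary_on (a + k) (b + k) T}"
    by (auto simp: secondary_on_shift)
  ultimately show ?thesis
    unfolding bij_betw_def using inj_on_subset[OF inj_shift, of "{S. secondary_on a b S}"] by blast
qed

lemma card_shift:
  "card {T. secondary_on (a + k) (b + k) T \<and> P T} = card {S. secondary_on a b S \<and> P (shift k S)}"
  using bij_betw_same_card[OF bij_betw_Collect[OF bij_betw_shift, where Q = P and P = "\<lambda>S. P (shift k S)"]] by simp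

section \<open>Counting by the partner of the first position\<close>

definition canonical_on :: "nat \<Rightarrow> nat \<Rightarrow> (nat \<times> nat) set set" where
  "canonical_on a b = {S. secondary_on a b S \<and> canonical_except {} S}"

definition almost_canonical_on :: "nat \<Rightarrow> nat \<Rightarrow> (nat \<times> nat) set set" where
  "almost_canonical_on a b = {S. secondary_on a b S \<and> canonical_except {(a, b)} S}"

text \<open>\<open>enclosable_on 1 n\<close> is the class \<open>L\<^sub>2\<close> of the paper, see \<open>num_L2_eq_card\<close>.\<close>

definition enclosable_on :: "nat \<Rightarrow> nat \<Rightarrow> (nat \<times> nat) set set" where
  "enclosable_on a b = {S. secondary_on a b S \<and> canonical_except {(a, b)} S \<and> (a, b) \<in> S}"

definition num_almost_canonical :: "nat \<Rightarrow> nat" where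
  "num_almost_canonical n = card (almost_canonical_on 1 n)"

lemma num_canonical_eq_card: "num_canonical n = card (canonical_on 1 n)"
  unfolding num_canonical_def canonical_on_def secondary_iff_secondary_on canonical_iff_canonical_except ..

lemma card_shift_canonical_except:
  assumes "1 \<le> a"
  shows "card {T. secondary_on (a + k) (b + k) T \<and> canonical_except (shift k X) T \<and> shift k Y \<subseteq> T} =
    card {S. secondary_on a b S \<and> canonical_except X S \<and> Y \<subseteq> S}"
proof -
  have "canonical_except (shift k X) (shift k S) \<and> shift k Y \<subseteq> shift k S \<longleftrightarrow> canonical_except X S \<and> Y \<subseteq> S"
    if "secondary_on a b S" for S
    by (simp add: canonical_except_shift[OF assms that] shift_subset_shift_iff)
  then have "{S. secondary_on a b S \<and> canonical_except (shift k X) (shift k S) \<and> shift k Y \<subseteq> shift k S} =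
      {S. secondary_on a b S \<and> canonical_except X S \<and> Y \<subseteq> S}"
    by blast
  then show ?thesis
    using card_shift[of a k b "\<lambda>T. canonical_except (shift k X) T \<and> shift k Y \<subseteq> T"] by simp
qed

lemma card_canonical_on: "1 \<le> a \<Longrightarrow> a \<le> b + 1 \<Longrightarrow> card (canonical_on a b) = num_canonical (b + 1 - a)"
  using card_shift_canonical_except[of 1 "a - 1" "b + 1 - a" "{}" "{}"]
  by (simp add: canonical_on_def num_canonical_eq_card shift_def)

lemma card_almost_canonical_on:
  "1 \<le> a \<Longrightarrow> a \<le> b + 1 \<Longrightarrow> card (almost_canonical_on a b) = num_almost_canonical (b + 1 - a)"
  using card_shift_canonical_except[of 1 "a - 1" "b + 1 - a" "{(1, b + 1 - a)}" "{}"]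
  by (simp add: almost_canonical_on_def num_almost_canonical_def shift_singleton shift_def)

lemma card_enclosable_on_shift:
  "1 \<le> a \<Longrightarrow> a \<le> b + 1 \<Longrightarrow> card (enclosable_on a b) = card (enclosable_on 1 (b + 1 - a))"
  using card_shift_canonical_except[of 1 "a - 1" "b + 1 - a" "{(1, b + 1 - a)}" "{(1, b + 1 - a)}"]
  by (simp add: enclosable_on_def shift_singleton)

lemma enclose_eq_insert_shift: "enclose n T = insert (1, n + 2) (shift 1 T)"
  unfolding enclose_def shift_def by simp

lemma num_L2_eq_card: "num_L2 n = card (enclosable_on 1 n)"
proof -
  have "secondary n T \<and> secondary (n + 2) (enclose n T) \<and> canonical (enclose n T) \<longleftrightarrow> T \<in> enclosable_on 1 n"
    for T
  proof (cases "secondary_on 1 n T \<and> 1 \<le> n")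
    case True
    then have T: "secondary_on (1 + 1) (n + 2 - 1) (shift 1 T)"
      using secondary_on_shift[of 1 1 n T] by simp
    have "secondary (n + 2) (enclose n T)"
      unfolding secondary_iff_secondary_on enclose_eq_insert_shift
      using secondary_on_insert_pair[of 1 "n + 2" "n + 2" "shift 1 T" "{}"] True T secondary_on_empty
      by simp
    moreover have "canonical (enclose n T) \<longleftrightarrow> (1, n) \<in> T \<and> canonical_except {(1, n)} T"
    proof -
      have "canonical (enclose n T) \<longleftrightarrow>
          (1 + 1, n + 1) \<in> shift 1 T \<and> canonical_except {(1 + 1, n + 1)} (shift 1 T)"
        unfolding canonical_iff_canonical_except enclose_eq_insert_shift
        using canonical_except_insert_pair[of 1 "n + 2" "{}", OF _ _ _ T secondary_on_empty] True
        by (simp add: canonical_except_empty)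
      also have "\<dots> \<longleftrightarrow> (1, n) \<in> T \<and> canonical_except {(1, n)} T"
        using shift_mem_shift_iff[of 1 1 n T] canonical_except_shift[of 1 n T 1 "{(1, n)}"] True
        by (simp add: shift_singleton)
      finally show ?thesis .
    qed
    ultimately show ?thesis
      using True unfolding enclosable_on_def secondary_iff_secondary_on by auto
  next
    case False
    then have "T \<notin> enclosable_on 1 n"
      using secondary_on_bounds[of 1 n T 1 n] unfolding enclosable_on_def by auto
    moreover have "\<not> (secondary n T \<and> secondary (n + 2) (enclose n T))"
      using False secondary_on_bounds[of 1 "n + 2" "enclose n T" 1 "n + 2"]
      unfolding secondary_iff_secondary_on enclose_def by auto
    ultimately show ?thesis
      by blast
  qed
  then show ?thesis
    unfolding num_L2_def by simp
qed

lemma card_canonical_except_with_pair: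
  assumes "1 \<le> a" "a + 2 \<le> c" "c \<le> b" "X \<subseteq> {(a, c)}"
  shows "card {S. secondary_on a b S \<and> canonical_except X S \<and> (a, c) \<in> S} =
    card {S1. secondary_on (a + 1) (c - 1) S1 \<and> canonical_except {(a + 1, c - 1)} S1 \<and>
              ((a + 1, c - 1) \<in> S1 \<or> (a, c) \<in> X)} *
    card (canonical_on (c + 1) b)"
    (is "card ?L = card ?I * card ?C")
proof -
  let ?join = "\<lambda>(S1, S2). insert (a, c) (S1 \<union> S2)"
  note split = canonical_except_insert_pair[OF assms(1,2,4)]
  have "?L = ?join ` (?I \<times> ?C)"
  proof (intro equalityI subsetI)
    fix S assume "S \<in> ?L"
    then have S: "secondary_on a b S" "canonical_except X S" "(a, c) \<in> S" by auto
    define S1 where "S1 = {p \<in> S. snd p < c}"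
    define S2 where "S2 = {p \<in> S. c < fst p}"
    have S1: "secondary_on (a + 1) (c - 1) S1" and S2: "secondary_on (c + 1) b S2"
      and eq: "S = insert (a, c) (S1 \<union> S2)"
      unfolding S1_def S2_def using secondary_on_split[OF S(1,3)] by simp_all
    have "(S1, S2) \<in> ?I \<times> ?C"
      using S(2) S1 S2 split[OF S1 S2] unfolding eq canonical_on_def by simp
    then show "S \<in> ?join ` (?I \<times> ?C)"
      using eq by force
  next
    fix S assume "S \<in> ?join ` (?I \<times> ?C)"
    then obtain S1 S2 where parts: "S1 \<in> ?I" "S2 \<in> ?C" and eq: "S = insert (a, c) (S1 \<union> S2)"
      by auto
    then have S1: "secondary_on (a + 1) (c - 1) S1" and S2: "secondary_on (c + 1) b S2"
      unfolding canonical_on_def by auto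
    show "S \<in> ?L"
      using parts secondary_on_insert_pair[OF assms(2,3) S1 S2] split[OF S1 S2]
      unfolding eq canonical_on_def by simp
  qed
  moreover have "inj_on ?join (?I \<times> ?C)"
    by (rule inj_on_subset[OF inj_on_insert_pair[OF assms(2)]]) (auto simp: canonical_on_def)
  ultimately show ?thesis
    by (simp add: card_image card_cartesian_product)
qed

lemma canonical_on_empty_interval: "canonical_on (b + 1) b = {{}}"
  unfolding canonical_on_def
  using secondary_on_bounds[of "b + 1" b] secondary_on_empty canonical_except_empty by fastforce

lemma card_canonical_on_with_pair:
  assumes "1 \<le> a" "a + 2 \<le> c" "c \<le> b"
  shows "card {S \<in> canonical_on a b. (a, c) \<in> S} = card (enclosable_on (a + 1) (c - 1)) * card (canonical_on (c + 1) b)"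
proof -
  have "{S \<in> canonical_on a b. (a, c) \<in> S} = {S. secondary_on a b S \<and> canonical_except {} S \<and> (a, c) \<in> S}"
    unfolding canonical_on_def by blast
  moreover have "enclosable_on (a + 1) (c - 1) = {S1. secondary_on (a + 1) (c - 1) S1 \<and>
      canonical_except {(a + 1, c - 1)} S1 \<and> ((a + 1, c - 1) \<in> S1 \<or> (a, c) \<in> {})}"
    unfolding enclosable_on_def by blast
  ultimately show ?thesis
    using card_canonical_except_with_pair[OF assms, of "{}"] by (simp only: empty_subsetI)
qed

lemma card_enclosable_on:
  assumes "1 \<le> a" "a + 2 \<le> b"
  shows "card (enclosable_on a b) = card (almost_canonical_on (a + 1) (b - 1))"
  using card_canonical_except_with_pair[OF assms order_refl, of "{(a, b)}"]
  unfolding enclosable_on_def almost_canonical_on_def canonical_on_empty_interval by simp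

lemma canonical_on_unpaired:
  "{S \<in> canonical_on a b. \<forall>c. (a, c) \<notin> S} = canonical_on (a + 1) b"
proof (intro equalityI subsetI)
  fix S assume "S \<in> {S \<in> canonical_on a b. \<forall>c. (a, c) \<notin> S}"
  then have S: "secondary_on a b S" "canonical_except {} S" "\<forall>c. (a, c) \<notin> S"
    unfolding canonical_on_def by auto
  have "a + 1 \<le> i \<and> j \<le> b" if "(i, j) \<in> S" for i j
    using that S(3) secondary_on_bounds[OF S(1) that] by (cases "i = a") auto
  then have "secondary_on (a + 1) b S"
    by (rule secondary_on_subset[OF S(1) order_refl])
  then show "S \<in> canonical_on (a + 1) b"
    using S(2) unfolding canonical_on_def by simp
next
  fix S assume "S \<in> canonical_on (a + 1) b"
  then have S: "secondary_on (a + 1) b S" "canonical_except {} S"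
    unfolding canonical_on_def by auto
  have "secondary_on a b S"
    by (rule secondary_on_subset[OF S(1) order_refl]) (use secondary_on_bounds[OF S(1)] in force)
  moreover have "\<forall>c. (a, c) \<notin> S"
    using secondary_on_bounds[OF S(1)] by force
  ultimately show "S \<in> {S \<in> canonical_on a b. \<forall>c. (a, c) \<notin> S}"
    using S(2) unfolding canonical_on_def by simp
qed

lemma finite_canonical_on: "finite (canonical_on a b)"
  unfolding canonical_on_def by (rule finite_subset[OF _ finite_secondary_on]) blast

lemma finite_enclosable_on: "finite (enclosable_on a b)"
  unfolding enclosable_on_def by (rule finite_subset[OF _ finite_secondary_on]) blast

lemma num_canonical_by_first_partner:
  assumes "1 \<le> n"
  shows "num_canonical n = num_canonical (n - 1) + (\<Sum>c = 3..n. num_L2 (c - 2) * num_canonical (n - c))"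
proof -
  let ?U = "{S \<in> canonical_on 1 n. \<forall>c. (1, c) \<notin> S}"
  let ?P = "\<lambda>c. {S \<in> canonical_on 1 n. (1, c) \<in> S}"
  have partner: "c \<in> {3..n}" if "S \<in> canonical_on 1 n" "(1, c) \<in> S" for S c
    using that secondary_on_bounds[of 1 n S 1 c] unfolding canonical_on_def by auto
  have cover: "canonical_on 1 n = ?U \<union> (\<Union>c\<in>{3..n}. ?P c)"
    using partner by blast
  have disjoint: "?P c \<inter> ?P c' = {}" if "c \<noteq> c'" for c c'
    using that secondary_on_disjoint[of 1 n _ 1 c 1 c'] unfolding canonical_on_def by blast
  from cover have "card (canonical_on 1 n) = card (?U \<union> (\<Union>c\<in>{3..n}. ?P c))"
    by (rule arg_cong)
  also have "\<dots> = card ?U + card (\<Union>c\<in>{3..n}. ?P c)"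
    by (rule card_Un_disjoint) (use finite_canonical_on in auto)
  also have "card (\<Union>c\<in>{3..n}. ?P c) = (\<Sum>c = 3..n. card (?P c))"
    by (rule card_UN_disjoint) (use finite_canonical_on disjoint in auto)
  also have "card ?U = num_canonical (n - 1)"
    using assms card_canonical_on[of 2 n] by (simp add: canonical_on_unpaired numeral_2_eq_2)
  also have "(\<Sum>c = 3..n. card (?P c)) = (\<Sum>c = 3..n. num_L2 (c - 2) * num_canonical (n - c))"
  proof (rule sum.cong)
    fix c assume "c \<in> {3..n}"
    then show "card (?P c) = num_L2 (c - 2) * num_canonical (n - c)"
      using card_canonical_on_with_pair[of 1 c n] card_enclosable_on_shift[of 2 "c - 1"]
        card_canonical_on[of "c + 1" n]
      by (simp add: num_L2_eq_card numeral_2_eq_2)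
  qed simp
  finally show ?thesis
    by (simp add: num_canonical_eq_card)
qed

lemma num_L2_eq_num_almost_canonical: "num_L2 n = (if 3 \<le> n then num_almost_canonical (n - 2) else 0)"
proof (cases "3 \<le> n")
  case True
  then show ?thesis
    using card_enclosable_on[of 1 n] card_almost_canonical_on[of 2 "n - 1"]
    by (simp add: num_L2_eq_card numeral_2_eq_2)
next
  case False
  then have "enclosable_on 1 n = {}"
    using secondary_on_bounds[of 1 n _ 1 n] unfolding enclosable_on_def by auto
  then show ?thesis
    using False by (simp add: num_L2_eq_card)
qed

lemma num_almost_canonical_inclusion_exclusion: "num_almost_canonical n + num_L2 (n - 2) = num_canonical n + num_L2 n"
proof -
  have "almost_canonical_on 1 n = canonical_on 1 n \<union> enclosable_on 1 n"
    unfolding almost_canonical_on_def canonical_on_def enclosable_on_def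
    using canonical_except_disjoint[of "{(1, n)}"] canonical_except_mono[of "{}" "{(1, n)}"] by blast
  moreover have "canonical_on 1 n \<inter> enclosable_on 1 n = {S \<in> canonical_on 1 n. (1, n) \<in> S}"
    unfolding canonical_on_def enclosable_on_def using canonical_except_mono[of "{}" "{(1, n)}"] by blast
  moreover have "card {S \<in> canonical_on 1 n. (1, n) \<in> S} = num_L2 (n - 2)"
  proof (cases "3 \<le> n")
    case True
    then show ?thesis
      using card_canonical_on_with_pair[of 1 n n] card_enclosable_on_shift[of 2 "n - 1"]
        canonical_on_empty_interval[of n]
      by (simp add: num_L2_eq_card numeral_2_eq_2)
  next
    case False
    then have empty: "{S \<in> canonical_on 1 n. (1, n) \<in> S} = {}"
      using secondary_on_bounds[of 1 n _ 1 n] unfolding canonical_on_def by auto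
    show ?thesis
      unfolding empty using False num_L2_eq_num_almost_canonical[of "n - 2"] by simp
  qed
  ultimately show ?thesis
    using card_Un_Int[OF finite_canonical_on finite_enclosable_on]
    by (simp add: num_almost_canonical_def num_canonical_eq_card num_L2_eq_card)
qed

section \<open>The functional equations\<close>

lemma num_canonical_0: "num_canonical 0 = 1"
  using canonical_on_empty_interval[of 0] by (simp add: num_canonical_eq_card)

lemma num_L2_0: "num_L2 0 = 0"
  by (simp add: num_L2_eq_num_almost_canonical)

lemma num_canonical_convolution:
  assumes "1 \<le> n"
  shows "num_canonical n = num_canonical (n - 1) + (\<Sum>i = 0..n - 2. num_L2 i * num_canonical (n - 2 - i))"
proof -
  have "(\<Sum>c = 3..n. num_L2 (c - 2) * num_canonical (n - c)) = (\<Sum>i = 1..n - 2. num_L2 i * num_canonical (n - 2 - i))"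
  proof (cases "n = 1")
    case False
    then have "n - 2 + 2 = n" using assms by simp
    then show ?thesis
      using sum.shift_bounds_cl_nat_ivl[of "\<lambda>c. num_L2 (c - 2) * num_canonical (n - c)" 1 2 "n - 2"]
      by (simp add: numeral_3_eq_3 numeral_2_eq_2)
  qed simp
  also have "\<dots> = (\<Sum>i = 0..n - 2. num_L2 i * num_canonical (n - 2 - i))"
    by (simp add: sum.atLeast_Suc_atMost[of 0] num_L2_0)
  finally show ?thesis
    using num_canonical_by_first_partner[OF assms] by simp
qed

text \<open>For \<open>n < 4\<close> the truncated subtractions only produce the vanishing terms
  \<open>num_L2 0\<close>.\<close>

lemma num_L2_recurrence:
  "num_L2 n + num_L2 (n - 4) = (if n < 3 then 0 else num_canonical (n - 2)) + num_L2 (n - 2)"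
proof (cases "n < 3")
  case True
  then show ?thesis
    by (simp add: num_L2_eq_num_almost_canonical)
next
  case False
  then show ?thesis
    using num_L2_eq_num_almost_canonical[of n] num_almost_canonical_inclusion_exclusion[of "n - 2"] by simp
qed

definition canonical_gf :: "'a::comm_ring_1 fps" where
  "canonical_gf = Abs_fps (\<lambda>n. of_nat (if n = 0 then 0 else num_canonical n))"

definition enclosable_gf :: "'a::comm_ring_1 fps" where
  "enclosable_gf = Abs_fps (\<lambda>n. of_nat (num_L2 n))"

lemma S_fps_eq_canonical_gf: "S_fps = canonical_gf"
  by (rule fps_ext) (simp add: S_fps_def canonical_gf_def)

lemma R_fps_eq_enclosable_gf: "R_fps = enclosable_gf"
  by (rule fps_ext) (simp add: R_fps_def enclosable_gf_def)

lemma canonical_gf_equation: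
  "(canonical_gf :: 'a::comm_ring_1 fps) =
    fps_X + fps_X * canonical_gf + fps_X^2 * enclosable_gf + fps_X^2 * canonical_gf * enclosable_gf"
proof -
  let ?C = "Abs_fps (\<lambda>n. of_nat (num_canonical n)) :: 'a fps" and ?R = "enclosable_gf :: 'a fps"
  have "?C = 1 + fps_X * ?C + fps_X^2 * (?R * ?C)"
  proof (rule fps_ext)
    fix n
    have X1: "fps_nth (fps_X * ?C) n = (if n < 1 then 0 else of_nat (num_canonical (n - 1)))"
      using fps_X_power_mult_nth[of 1 ?C n] by simp
    have X2: "fps_nth (fps_X^2 * (?R * ?C)) n =
        (if n < 2 then 0 else of_nat (\<Sum>i = 0..n - 2. num_L2 i * num_canonical (n - 2 - i)))"
      using fps_X_power_mult_nth[of 2 "?R * ?C" n] by (simp add: fps_mult_nth enclosable_gf_def)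
    show "fps_nth ?C n = fps_nth (1 + fps_X * ?C + fps_X^2 * (?R * ?C)) n"
    proof (cases "n = 0")
      case False
      then show ?thesis
        using X1 X2 num_canonical_convolution[of n] by (simp add: num_L2_0)
    qed (simp add: num_canonical_0)
  qed
  moreover have "?C = 1 + canonical_gf"
    by (rule fps_ext) (simp add: canonical_gf_def num_canonical_0)
  ultimately show ?thesis
    by (simp add: algebra_simps power2_eq_square)
qed

lemma enclosable_gf_equation:
  "(enclosable_gf :: 'a::comm_ring_1 fps) =
    fps_X^3 + fps_X^2 * enclosable_gf + fps_X^4 * canonical_gf * enclosable_gf + fps_X^3 * canonical_gf"
proof -
  let ?S = "canonical_gf :: 'a fps" and ?R = "enclosable_gf :: 'a fps"
  have "?R + fps_X^4 * ?R = fps_X^2 * ?S + fps_X^2 * ?R"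
  proof (rule fps_ext)
    fix n
    have "fps_nth (?R + fps_X^4 * ?R) n = of_nat (num_L2 n + num_L2 (n - 4))"
      using fps_X_power_mult_nth[of 4 ?R n] by (cases "n < 4") (simp_all add: enclosable_gf_def num_L2_0)
    moreover have "fps_nth (fps_X^2 * ?S + fps_X^2 * ?R) n =
        of_nat ((if n < 3 then 0 else num_canonical (n - 2)) + num_L2 (n - 2))"
      using fps_X_power_mult_nth[of 2 ?R n] fps_X_power_mult_nth[of 2 ?S n]
      by (cases "n < 3") (simp_all add: canonical_gf_def enclosable_gf_def num_L2_0)
    ultimately show "fps_nth (?R + fps_X^4 * ?R) n = fps_nth (fps_X^2 * ?S + fps_X^2 * ?R) n"
      by (simp only: num_L2_recurrence)
  qed
  then have "?R = fps_X^2 * ?S + fps_X^2 * ?R - fps_X^4 * ?R"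
    by (simp add: algebra_simps)
  also have "fps_X^2 * ?S = fps_X^3 + fps_X^3 * ?S + fps_X^4 * ?R + fps_X^4 * ?S * ?R"
    by (subst canonical_gf_equation) (simp add: algebra_simps numeral_eq_Suc)
  finally show ?thesis
    by (simp add: algebra_simps)
qed

text \<open>Eliminating \<open>R\<close>: the difference of the two sides is a combination of the two functional
  equations.\<close>

lemma canonical_gf_quadratic:
  "fps_X^4 * canonical_gf^2 + (fps_X - fps_X^3 + fps_X^5) =
    (1 - fps_X - fps_X^2 + fps_X^3 - fps_X^5) * (canonical_gf :: 'a::comm_ring_1 fps)"
proof -
  let ?X = "fps_X :: 'a fps" and ?S = "canonical_gf :: 'a fps" and ?R = "enclosable_gf :: 'a fps"
  define P where "P = ?S - (?X + ?X * ?S + ?X^2 * ?R + ?X^2 * ?S * ?R)"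
  define Q where "Q = ?R - (?X^3 + ?X^2 * ?R + ?X^4 * ?S * ?R + ?X^3 * ?S)"
  have "P = 0" "Q = 0"
    unfolding P_def Q_def using canonical_gf_equation enclosable_gf_equation by simp_all
  moreover have "(1 - ?X - ?X^2 + ?X^3 - ?X^5) * ?S - (?X^4 * ?S^2 + (?X - ?X^3 + ?X^5)) =
      P * (1 - ?X^2 - ?X^4 * ?S) + ?X^2 * (1 + ?S) * Q"
    unfolding P_def Q_def by (simp add: algebra_simps numeral_eq_Suc)
  ultimately show ?thesis
    by simp
qed

section \<open>The closed form\<close>

lemma num_canonical_le: "num_canonical n \<le> 4 ^ n"
  unfolding num_canonical_eq_card canonical_on_def
  by (rule order_trans[OF card_mono card_secondary_on_le]) (auto intro: finite_secondary_on)

lemma norm_canonical_gf_nth_le: "norm (fps_nth (canonical_gf :: complex fps) n) \<le> 4 ^ n"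
proof -
  have "real (num_canonical n) \<le> 4 ^ n"
    using num_canonical_le[of n] by (metis of_nat_le_iff of_nat_numeral of_nat_power)
  then show ?thesis
    by (simp add: canonical_gf_def)
qed

lemma fps_conv_radius_canonical_gf_ge: "ereal (1/5) \<le> fps_conv_radius (canonical_gf :: complex fps)"
proof -
  have "summable (\<lambda>n. fps_nth (canonical_gf :: complex fps) n * of_real (1/5) ^ n)"
  proof (rule summable_comparison_test')
    show "summable (\<lambda>n. (4/5 :: real) ^ n)"
      by (rule summable_geometric) simp
    show "norm (fps_nth (canonical_gf :: complex fps) n * of_real (1/5) ^ n) \<le> (4/5) ^ n" for n
      using mult_right_mono[OF norm_canonical_gf_nth_le[of n], of "(1/5) ^ n"]
      by (simp add: norm_mult norm_divide norm_power power_divide)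
  qed
  then have "norm (of_real (1/5) :: complex) \<le> conv_radius (fps_nth (canonical_gf :: complex fps))"
    by (rule conv_radius_geI)
  then show ?thesis
    unfolding fps_conv_radius_def by simp
qed

lemma norm_less_fps_conv_radius_canonical_gf:
  fixes z :: complex
  assumes "norm z < 1/5"
  shows "ereal (norm z) < fps_conv_radius (canonical_gf :: complex fps)"
proof -
  have "ereal (norm z) < ereal (1/5)"
    using assms by simp
  then show ?thesis
    using fps_conv_radius_canonical_gf_ge by (rule less_le_trans)
qed

lemma norm_eval_canonical_gf_le:
  fixes z :: complex
  assumes "norm z \<le> 1/8"
  shows "norm (eval_fps canonical_gf z) \<le> 2"
proof -
  have "norm (eval_fps canonical_gf z) \<le> (\<Sum>n. (1/2 :: real) ^ n)"
    unfolding eval_fps_def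
  proof (rule norm_suminf_le)
    show "summable (\<lambda>n. (1/2 :: real) ^ n)"
      by (rule summable_geometric) simp
    have "norm (fps_nth (canonical_gf :: complex fps) n * z ^ n) \<le> 4 ^ n * (1/8) ^ n" for n
      unfolding norm_mult norm_power
      by (rule mult_mono[OF norm_canonical_gf_nth_le power_mono]) (use assms in auto)
    then show "norm (fps_nth (canonical_gf :: complex fps) n * z ^ n) \<le> (1/2) ^ n" for n
      by (simp add: power_mult_distrib[symmetric])
  qed
  also have "\<dots> = 2"
    using suminf_geometric[of "1/2 :: real"] by simp
  finally show ?thesis .
qed

text \<open>Conditional simplification rules that let \<open>eval_fps\<close> commute with the ring operations
  inside the disc of convergence.\<close>

lemma fps_conv_radius_gt_add:
  "ereal r < fps_conv_radius f \<Longrightarrow> ereal r < fps_conv_radius g \<Longrightarrow> ereal r < fps_conv_radius (f + g)"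
  using fps_conv_radius_add[of f g] by (meson min_less_iff_conj less_le_trans)

lemma fps_conv_radius_gt_diff:
  "ereal r < fps_conv_radius f \<Longrightarrow> ereal r < fps_conv_radius g \<Longrightarrow> ereal r < fps_conv_radius (f - g)"
  using fps_conv_radius_diff[of f g] by (meson min_less_iff_conj less_le_trans)

lemma fps_conv_radius_gt_mult:
  "ereal r < fps_conv_radius f \<Longrightarrow> ereal r < fps_conv_radius g \<Longrightarrow> ereal r < fps_conv_radius (f * g)"
  using fps_conv_radius_mult[of f g] by (meson min_less_iff_conj less_le_trans)

lemma fps_conv_radius_gt_power:
  "ereal r < fps_conv_radius f \<Longrightarrow> ereal r < fps_conv_radius (f ^ n)"
  using fps_conv_radius_power[of f n] by (meson less_le_trans)

lemma eval_canonical_gf_quadratic: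
  fixes z :: complex
  assumes "norm z < 1/5"
  shows "z^4 * (eval_fps canonical_gf z)^2 + (z - z^3 + z^5) =
    (1 - z - z^2 + z^3 - z^5) * eval_fps canonical_gf z"
proof -
  note radius = norm_less_fps_conv_radius_canonical_gf[OF assms]
  have "eval_fps (fps_X^4 * canonical_gf^2 + (fps_X - fps_X^3 + fps_X^5)) z =
      eval_fps ((1 - fps_X - fps_X^2 + fps_X^3 - fps_X^5) * canonical_gf) z"
    by (simp only: canonical_gf_quadratic)
  with radius show ?thesis
    by (simp add: eval_fps_add eval_fps_diff eval_fps_mult eval_fps_power fps_conv_radius_gt_add
        fps_conv_radius_gt_diff fps_conv_radius_gt_mult fps_conv_radius_gt_power)
qed

lemma F_poly_eq_square:
  fixes z :: complex
  assumes "norm z < 1/5"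
  shows "F_poly z = (1 - z - z^2 + z^3 - z^5 - 2 * z^4 * eval_fps canonical_gf z)^2"
proof -
  define \<sigma> where "\<sigma> = eval_fps (canonical_gf :: complex fps) z"
  define B where "B = 1 - z - z^2 + z^3 - z^5"
  have quadratic: "B * \<sigma> - z^4 * \<sigma>^2 = z - z^3 + z^5"
    using eval_canonical_gf_quadratic[OF assms] unfolding \<sigma>_def B_def by (simp add: algebra_simps)
  have "F_poly z = B^2 - 4 * z^4 * (B * \<sigma> - z^4 * \<sigma>^2)"
    unfolding quadratic unfolding F_poly_def B_def by algebra
  also have "\<dots> = (B - 2 * z^4 * \<sigma>)^2"
    by algebra
  finally show ?thesis
    unfolding \<sigma>_def B_def .
qed

text \<open>Writing \<open>w\<close> for this root, \<open>|1 - w| \<le> 8 |z| < 1\<close>, using \<open>|S(z)| \<le> 2\<close>.\<close>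

lemma Re_closed_form_root_pos:
  fixes z :: complex
  assumes z: "norm z < 1/8"
  shows "0 < Re (1 - z - z^2 + z^3 - z^5 - 2 * z^4 * eval_fps canonical_gf z)"
proof -
  define \<sigma> where "\<sigma> = eval_fps (canonical_gf :: complex fps) z"
  define t where "t = norm z"
  have t: "0 \<le> t" "t < 1/8"
    using z unfolding t_def by auto
  have power_le: "t ^ k \<le> t" if "1 \<le> k" for k
    using power_decreasing[of 1 k t] t that by simp
  have "norm (2 * z^4 * \<sigma>) \<le> 2 * t * 2"
    using power_le[of 4] t norm_eval_canonical_gf_le[of z] z
    unfolding \<sigma>_def t_def norm_mult norm_power by (intro mult_mono) auto
  moreover have "norm (z + z^2 - z^3 + z^5 + 2 * z^4 * \<sigma>) \<le>
      norm z + norm (z^2) + norm (z^3) + norm (z^5) + norm (2 * z^4 * \<sigma>)"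
    by (intro order_trans[OF norm_triangle_ineq] add_mono order_trans[OF norm_triangle_ineq4]
        norm_triangle_ineq order_refl)
  ultimately have "norm (1 - (1 - z - z^2 + z^3 - z^5 - 2 * z^4 * \<sigma>)) \<le> t + t + t + t + 4 * t"
    using power_le[of 2] power_le[of 3] power_le[of 5]
    unfolding t_def norm_power by (simp add: algebra_simps)
  then have "norm (1 - (1 - z - z^2 + z^3 - z^5 - 2 * z^4 * \<sigma>)) < 1"
    using t by simp
  then show ?thesis
    using complex_Re_le_cmod[of "1 - (1 - z - z^2 + z^3 - z^5 - 2 * z^4 * \<sigma>)"] unfolding \<sigma>_def by simp
qed

lemma csqrt_F_poly:
  fixes z :: complex
  assumes "norm z < 1/8"
  shows "csqrt (F_poly z) = 1 - z - z^2 + z^3 - z^5 - 2 * z^4 * eval_fps canonical_gf z"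
  using assms F_poly_eq_square[of z] Re_closed_form_root_pos[OF assms] by (intro csqrt_unique) simp_all

lemma canonical_series_sums_closed_form:
  fixes z :: complex
  assumes "0 < norm z" "norm z < 1/8"
  shows "(\<lambda>n. of_nat (if n = 0 then 0 else num_canonical n) * z ^ n) sums
    ((1 - z - z^2 + z^3 - z^5 - csqrt (F_poly z)) / (2 * z^4))"
proof -
  have "(\<lambda>n. fps_nth canonical_gf n * z ^ n) sums eval_fps canonical_gf z"
    using assms(2) by (intro sums_eval_fps norm_less_fps_conv_radius_canonical_gf) simp
  moreover have "(1 - z - z^2 + z^3 - z^5 - csqrt (F_poly z)) / (2 * z^4) = eval_fps canonical_gf z"
    using assms by (simp add: csqrt_F_poly)
  ultimately show ?thesis
    by (simp add: canonical_gf_def)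
qed

theorem mainTheorem2:
  shows "(\<exists>r>0. \<forall>z::complex. 0 < norm z \<and> norm z < r \<longrightarrow>
            (\<lambda>n. of_nat (if n = 0 then 0 else num_canonical n) * z ^ n) sums
              ((1 - z - z^2 + z^3 - z^5 - csqrt (F_poly z)) / (2 * z^4)))
         \<and> S_fps = fps_X + fps_X * S_fps + fps_X^2 * R_fps + fps_X^2 * S_fps * R_fps
         \<and> R_fps = fps_X^3 + fps_X^2 * R_fps + fps_X^4 * S_fps * R_fps + fps_X^3 * S_fps"
proof -
  have "\<exists>r>0. \<forall>z::complex. 0 < norm z \<and> norm z < r \<longrightarrow>
            (\<lambda>n. of_nat (if n = 0 then 0 else num_canonical n) * z ^ n) sums
              ((1 - z - z^2 + z^3 - z^5 - csqrt (F_poly z)) / (2 * z^4))"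
    by (intro exI[of _ "1/8"]) (auto intro: canonical_series_sums_closed_form)
  then show ?thesis
    unfolding S_fps_eq_canonical_gf R_fps_eq_enclosable_gf
    using canonical_gf_equation enclosable_gf_equation by blast
qed

end
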